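(* Let $d\ge1$ and let $\mu={}^t(a_1,\dots,a_{2d+1})\in\mathbb{C}^{2d+1}$ be a unit vector with $|a_j|=|a_{d+1+j}|$ for $j=1,\dots,d$ and $a_{d+1}=0$. Let $C_\mu\phi=2\langle\phi,\mu\rangle\mu-\phi$. Then $U(S_{\rm lazy},\mathcal{P}_{\rm lazy},C_\mu)$ has both $1$ and $-1$ as eigenvalues.
   Context: $u_1,\dots,u_d$ standard basis of $\mathbb{Z}^d$, $\mathbf{e}_1,\dots,\mathbf{e}_{2d+1}$ standard basis of $\mathbb{C}^{2d+1}$, $P_j$ orthogonal projection onto $\mathbb{C}\mathbf{e}_j$. $S_{\rm lazy}=\{0,\pm u_1,\dots,\pm u_d\}$, $\mathcal{P}_{\rm lazy}=\{P_\alpha\}$ with $P_{u_j}=P_j$, $P_0=P_{d+1}$, $P_{-u_j}=P_{d+1+j}$. $(\tau^\alpha f)(x)=f(x-\alpha)$ on $\ell^2(\mathbb{Z}^d,\mathbb{C}^{2d+1})$, $U(S,\mathcal{P},C)=\big(\sum_{\alpha\in S}\tau^\alpha P_\alpha\big)C$ with $C$ acting pointwise; eigenvalue means point spectrum. Inner products are linear in the first argument. *)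

theory Defs
  imports "HOL-Analysis.Analysis"
begin

text \<open>Points of Z^d are functions nat => int vanishing outside {1..d};
 the basis vector u_j (j in {1..d}) is latunit j. Vectors of C^(2d+1) are functions
 nat => complex; only the components 1..2d+1 are meaningful (e_1,...,e_(2d+1)).\<close>

definition lattice :: "nat \<Rightarrow> (nat \<Rightarrow> int) set" where
  "lattice d = {x. \<forall>i. i \<notin> {1..d} \<longrightarrow> x i = 0}"

definition latunit :: "nat \<Rightarrow> nat \<Rightarrow> int" where
  "latunit j = (\<lambda>i. if i = j then 1 else 0)"

definition latzero :: "nat \<Rightarrow> int" where
  "latzero = (\<lambda>i. 0)"

definition latneg :: "(nat \<Rightarrow> int) \<Rightarrow> nat \<Rightarrow> int" where
  "latneg a = (\<lambda>i. - a i)"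

definition latminus :: "(nat \<Rightarrow> int) \<Rightarrow> (nat \<Rightarrow> int) \<Rightarrow> nat \<Rightarrow> int" where
  "latminus x a = (\<lambda>i. x i - a i)"

definition cinner :: "nat \<Rightarrow> (nat \<Rightarrow> complex) \<Rightarrow> (nat \<Rightarrow> complex) \<Rightarrow> complex" where
  "cinner d v w = (\<Sum>k\<in>{1..2*d+1}. v k * cnj (w k))"

definition proj :: "nat \<Rightarrow> (nat \<Rightarrow> complex) \<Rightarrow> nat \<Rightarrow> complex" where
  "proj j v = (\<lambda>k. if k = j then v k else 0)"

definition zeroop :: "(nat \<Rightarrow> complex) \<Rightarrow> nat \<Rightarrow> complex" where
  "zeroop v = (\<lambda>k. 0)"

definition S_lazy :: "nat \<Rightarrow> (nat \<Rightarrow> int) set" where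
  "S_lazy d = {latzero} \<union> {latunit j |j. j \<in> {1..d}} \<union> {latneg (latunit j) |j. j \<in> {1..d}}"

definition P_lazy :: "nat \<Rightarrow> (nat \<Rightarrow> int) \<Rightarrow> (nat \<Rightarrow> complex) \<Rightarrow> nat \<Rightarrow> complex" where
  "P_lazy d \<alpha> =
     (if \<alpha> = latzero then proj (d+1)
      else if (\<exists>j\<in>{1..d}. \<alpha> = latunit j) then proj (THE j. j \<in> {1..d} \<and> \<alpha> = latunit j)
      else if (\<exists>j\<in>{1..d}. \<alpha> = latneg (latunit j))
        then proj (d + 1 + (THE j. j \<in> {1..d} \<and> \<alpha> = latneg (latunit j)))
      else zeroop)"

definition l2space :: "nat \<Rightarrow> ((nat \<Rightarrow> int) \<Rightarrow> nat \<Rightarrow> complex) set" where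
  "l2space d = {f. (\<forall>x k. (x \<notin> lattice d \<or> k \<notin> {1..2*d+1}) \<longrightarrow> f x k = 0) \<and>
      (\<lambda>x. \<Sum>k\<in>{1..2*d+1}. (cmod (f x k))\<^sup>2) summable_on lattice d}"

definition Uop :: "nat \<Rightarrow> (nat \<Rightarrow> int) set \<Rightarrow> ((nat \<Rightarrow> int) \<Rightarrow> (nat \<Rightarrow> complex) \<Rightarrow> nat \<Rightarrow> complex)
     \<Rightarrow> ((nat \<Rightarrow> complex) \<Rightarrow> nat \<Rightarrow> complex)
     \<Rightarrow> ((nat \<Rightarrow> int) \<Rightarrow> nat \<Rightarrow> complex) \<Rightarrow> (nat \<Rightarrow> int) \<Rightarrow> nat \<Rightarrow> complex" where
  "Uop d S P C f = (\<lambda>x. if x \<in> lattice d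
       then (\<lambda>k. \<Sum>\<alpha>\<in>S. P \<alpha> (C (f (latminus x \<alpha>))) k) else (\<lambda>k. 0))"

definition coin :: "nat \<Rightarrow> (nat \<Rightarrow> complex) \<Rightarrow> (nat \<Rightarrow> complex) \<Rightarrow> nat \<Rightarrow> complex" where
  "coin d \<mu> \<phi> = (\<lambda>k. if k \<in> {1..2*d+1} then 2 * cinner d \<phi> \<mu> * \<mu> k - \<phi> k else 0)"

definition is_eigenvalue :: "nat \<Rightarrow> (((nat \<Rightarrow> int) \<Rightarrow> nat \<Rightarrow> complex) \<Rightarrow> (nat \<Rightarrow> int) \<Rightarrow> nat \<Rightarrow> complex)
     \<Rightarrow> complex \<Rightarrow> bool" where
  "is_eigenvalue d U c \<longleftrightarrow> (\<exists>f \<in> l2space d. f \<noteq> (\<lambda>x k. 0) \<and> U f = (\<lambda>x k. c * f x k))"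

end

theory Submission
  imports Defs
begin

(* A delta mass at the origin in the lazy direction e_(d+1) is orthogonal to mu (as
   mu_(d+1) = 0), so the coin negates it and the zero shift leaves it in place: eigenvalue -1.
   For eigenvalue 1, take the state f supported on the unit cube {0,1}^d whose value at x
   carries mu_j if x_j = 1 and mu_(d+1+j) if x_j = 0.  Since |mu_j| = |mu_(d+1+j)|, its inner
   product with mu is always sum_j |mu_j|^2 = 1/2, so the coin replaces f(x) by the
   complementary components mu - f(x); the shift by u_j (resp. -u_j) moves each of these to
   the neighbouring cube vertex, where it is exactly the component f had there. *)

lemma latunit_inject: "latunit i = latunit j \<longleftrightarrow> i = j"
  by (auto simp: latunit_def fun_eq_iff split: if_splits)

lemma latneg_latunit_inject: "latneg (latunit i) = latneg (latunit j) \<longleftrightarrow> i = j"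
  by (auto simp: latneg_def latunit_def fun_eq_iff split: if_splits)

lemma latunit_neq_latzero: "latunit j \<noteq> latzero"
  by (auto simp: latunit_def latzero_def fun_eq_iff)

lemma latneg_latunit_neq_latzero: "latneg (latunit j) \<noteq> latzero"
  by (auto simp: latneg_def latunit_def latzero_def fun_eq_iff)

lemma latneg_latunit_neq_latunit: "latneg (latunit j) \<noteq> latunit i"
  by (auto simp: latneg_def latunit_def fun_eq_iff)

lemma latminus_latzero: "latminus x latzero = x"
  by (simp add: latminus_def latzero_def)

lemma latminus_latunit: "latminus x (latunit k) = x(k := x k - 1)"
  by (auto simp: latminus_def latunit_def)

lemma latminus_latneg_latunit: "latminus x (latneg (latunit k)) = x(k := x k + 1)"
  by (auto simp: latminus_def latneg_def latunit_def)

lemma latzero_in_lattice: "latzero \<in> lattice d"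
  by (simp add: latzero_def lattice_def)

lemma P_lazy_latzero: "P_lazy d latzero = proj (d+1)"
  by (simp add: P_lazy_def)

lemma P_lazy_latunit:
  assumes "j \<in> {1..d}" shows "P_lazy d (latunit j) = proj j"
proof -
  have "(THE i. i \<in> {1..d} \<and> latunit j = latunit i) = j"
    using assms by (auto simp: latunit_inject)
  then show ?thesis
    using assms by (auto simp: P_lazy_def latunit_neq_latzero)
qed

lemma P_lazy_latneg_latunit:
  assumes "j \<in> {1..d}" shows "P_lazy d (latneg (latunit j)) = proj (d+1+j)"
proof -
  have "(THE i. i \<in> {1..d} \<and> latneg (latunit j) = latneg (latunit i)) = j"
    using assms by (auto simp: latneg_latunit_inject)
  then show ?thesis
    using assms by (auto simp: P_lazy_def latneg_latunit_neq_latzero latneg_latunit_neq_latunit)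
qed

lemma sum_S_lazy:
  "(\<Sum>\<alpha>\<in>S_lazy d. h \<alpha>) = h latzero + (\<Sum>j\<in>{1..d}. h (latunit j)) + (\<Sum>j\<in>{1..d}. h (latneg (latunit j)))"
proof -
  have S: "S_lazy d = insert latzero (latunit ` {1..d} \<union> (\<lambda>j. latneg (latunit j)) ` {1..d})"
    unfolding S_lazy_def by auto
  have "latzero \<notin> latunit ` {1..d} \<union> (\<lambda>j. latneg (latunit j)) ` {1..d}"
    using latunit_neq_latzero latneg_latunit_neq_latzero by (metis UnE imageE)
  moreover have "latunit ` {1..d} \<inter> (\<lambda>j. latneg (latunit j)) ` {1..d} = {}"
    using latneg_latunit_neq_latunit by (metis (no_types, lifting) disjoint_iff imageE)
  moreover have "inj_on latunit {1..d}" "inj_on (\<lambda>j. latneg (latunit j)) {1..d}"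
    by (auto intro: inj_onI simp: latunit_inject latneg_latunit_inject)
  ultimately show ?thesis
    by (simp add: S sum.union_disjoint sum.reindex add.assoc)
qed

lemma sum_proj_shifted:
  "(\<Sum>j\<in>{1..d}. proj (m + j) (v j) k) = (if k \<in> {m+1..m+d} then v (k - m) k else 0)"
proof -
  have "(\<Sum>j\<in>{1..d}. proj (m + j) (v j) k) = (\<Sum>j\<in>{1..d}. if j = k - m \<and> m < k then v (k - m) k else 0)"
    by (rule sum.cong) (auto simp: proj_def)
  also have "\<dots> = (if k \<in> {m+1..m+d} then v (k - m) k else 0)"
    by (auto simp: sum.delta' if_if_eq_conj[symmetric] simp del: if_if_eq_conj)
  finally show ?thesis .
qed

lemma Uop_lazy_apply:
  "Uop d (S_lazy d) (P_lazy d) C f x k =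
    (if x \<in> lattice d then
       if k \<in> {1..d} then C (f (x(k := x k - 1))) k
       else if k = d+1 then C (f x) k
       else if k \<in> {d+2..2*d+1} then C (f (x(k-d-1 := x (k-d-1) + 1))) k
       else 0
     else 0)"
proof -
  have "(\<Sum>\<alpha>\<in>S_lazy d. P_lazy d \<alpha> (C (f (latminus x \<alpha>))) k) =
      proj (d+1) (C (f x)) k
      + (\<Sum>j\<in>{1..d}. proj (0+j) (C (f (x(j := x j - 1)))) k)
      + (\<Sum>j\<in>{1..d}. proj (d+1+j) (C (f (x(j := x j + 1)))) k)"
    unfolding sum_S_lazy P_lazy_latzero latminus_latzero latminus_latunit latminus_latneg_latunit
    by (simp add: P_lazy_latunit P_lazy_latneg_latunit)
  then show ?thesis
    unfolding Uop_def sum_proj_shifted by (auto simp: proj_def)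
qed

lemma component_cases:
  fixes k d :: nat
  obtains "k \<in> {1..d}" | "k = d+1" | j where "j \<in> {1..d}" "k = d+1+j" | "k \<notin> {1..2*d+1}"
proof -
  have "k \<in> {1..d} \<or> k = d+1 \<or> (k - (d+1) \<in> {1..d} \<and> k = d+1+(k - (d+1))) \<or> k \<notin> {1..2*d+1}"
    by auto
  then show ?thesis using that by blast
qed

lemma sum_components_split:
  fixes d :: nat
  shows "(\<Sum>k\<in>{1..2*d+1}. h k) = (\<Sum>j\<in>{1..d}. h j) + h (d+1) + (\<Sum>j\<in>{1..d}. h (d+1+j))"
proof -
  let ?upper = "(+) (d+1) ` {1..d}"
  have upper: "?upper = {d+2..2*d+1}"
    by (subst image_add_atLeastAtMost) auto
  have "(\<Sum>k\<in>{1..2*d+1}. h k) = sum h ({1..d} \<union> insert (d+1) ?upper)"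
    using upper by (intro sum.cong) auto
  also have "\<dots> = sum h {1..d} + sum h (insert (d+1) ?upper)"
    using upper by (intro sum.union_disjoint) auto
  also have "sum h (insert (d+1) ?upper) = h (d+1) + sum h ?upper"
    using upper by (intro sum.insert) auto
  also have "sum h ?upper = (\<Sum>j\<in>{1..d}. h (d+1+j))"
    by (rule sum.reindex_cong[where l="(+) (d+1)"]) auto
  finally show ?thesis by (simp only: add.assoc)
qed

lemma finite_support_in_l2space:
  assumes "finite F" "F \<subseteq> lattice d"
    and "\<And>x k. f x k \<noteq> 0 \<Longrightarrow> x \<in> F \<and> k \<in> {1..2*d+1}"
  shows "f \<in> l2space d"
proof -
  have "{x \<in> lattice d. (\<Sum>k\<in>{1..2*d+1}. (cmod (f x k))\<^sup>2) \<noteq> 0} \<subseteq> F"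
  proof
    fix x assume "x \<in> {x \<in> lattice d. (\<Sum>k\<in>{1..2*d+1}. (cmod (f x k))\<^sup>2) \<noteq> 0}"
    then obtain k where "(cmod (f x k))\<^sup>2 \<noteq> 0"
      by (blast elim: sum.not_neutral_contains_not_neutral)
    then show "x \<in> F" using assms(3) by simp
  qed
  then have "(\<lambda>x. \<Sum>k\<in>{1..2*d+1}. (cmod (f x k))\<^sup>2) summable_on lattice d"
    by (intro finite_nonzero_values_imp_summable_on) (use assms(1) finite_subset in blast)
  then show ?thesis
    using assms(2,3) unfolding l2space_def by blast
qed

definition origin_state :: "nat \<Rightarrow> (nat \<Rightarrow> int) \<Rightarrow> nat \<Rightarrow> complex" where
  "origin_state d = (\<lambda>x k. if x = latzero \<and> k = d+1 then 1 else 0)"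

lemma coin_origin_state:
  assumes "\<mu> (d+1) = 0"
  shows "coin d \<mu> (origin_state d x) k = - origin_state d x k"
proof -
  have "cinner d (origin_state d x) \<mu> = (\<Sum>k\<in>{1..2*d+1}. if k = d+1 then origin_state d x k * cnj (\<mu> k) else 0)"
    unfolding cinner_def origin_state_def by (intro sum.cong) auto
  also have "\<dots> = origin_state d x (d+1) * cnj (\<mu> (d+1))"
    by simp
  also have "\<dots> = 0"
    using assms by simp
  finally show ?thesis
    by (auto simp: coin_def origin_state_def)
qed

lemma Uop_origin_state:
  assumes "\<mu> (d+1) = 0"
  shows "Uop d (S_lazy d) (P_lazy d) (coin d \<mu>) (origin_state d) = (\<lambda>x k. - 1 * origin_state d x k)"
proof (intro ext)
  fix x k
  show "Uop d (S_lazy d) (P_lazy d) (coin d \<mu>) (origin_state d) x k = - 1 * origin_state d x k"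
    unfolding Uop_lazy_apply coin_origin_state[where \<mu>=\<mu>, OF assms]
    using latzero_in_lattice[of d] by (auto simp: origin_state_def)
qed

lemma eigenvalue_minus_one:
  assumes "\<mu> (d+1) = 0"
  shows "is_eigenvalue d (Uop d (S_lazy d) (P_lazy d) (coin d \<mu>)) (-1)"
  unfolding is_eigenvalue_def
proof (intro bexI conjI)
  show "origin_state d \<in> l2space d"
    by (rule finite_support_in_l2space[of "{latzero}"])
      (auto simp: latzero_in_lattice origin_state_def split: if_splits)
  show "origin_state d \<noteq> (\<lambda>x k. 0)"
    by (auto simp: fun_eq_iff origin_state_def)
qed (rule Uop_origin_state[where \<mu>=\<mu>, OF assms])

definition cube :: "nat \<Rightarrow> (nat \<Rightarrow> int) set" where
  "cube d = {x \<in> lattice d. \<forall>i\<in>{1..d}. x i \<in> {0, 1}}"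

lemma finite_cube: "finite (cube d)"
proof -
  have "cube d \<subseteq> (\<lambda>S i. if i \<in> S then 1 else 0) ` Pow {1..d}"
  proof
    fix x assume x: "x \<in> cube d"
    then have "x = (\<lambda>i. if i \<in> {i\<in>{1..d}. x i = 1} then 1 else 0)"
      by (auto simp: cube_def lattice_def fun_eq_iff)
    then show "x \<in> (\<lambda>S i. if i \<in> S then 1 else 0) ` Pow {1..d}"
      by blast
  qed
  then show ?thesis
    by (rule finite_surj[rotated]) simp
qed

lemma latunit_in_cube: "j \<in> {1..d} \<Longrightarrow> latunit j \<in> cube d"
  by (simp add: cube_def lattice_def latunit_def)

lemma cube_fun_upd:
  "k \<in> {1..d} \<Longrightarrow> x(k := w) \<in> cube d \<longleftrightarrow> w \<in> {0, 1} \<and> x(k := 0) \<in> cube d"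
  by (auto simp: cube_def lattice_def)

lemma cube_fun_upd_minus_one:
  assumes "k \<in> {1..d}"
  shows "x(k := x k - 1) \<in> cube d \<and> x k - 1 \<noteq> 1 \<longleftrightarrow> x \<in> cube d \<and> x k = 1"
  using cube_fun_upd[OF assms, of x "x k - 1"] cube_fun_upd[OF assms, of x "x k"] by auto

lemma cube_fun_upd_plus_one:
  assumes "k \<in> {1..d}"
  shows "x(k := x k + 1) \<in> cube d \<and> x k + 1 \<noteq> 0 \<longleftrightarrow> x \<in> cube d \<and> x k = 0"
  using cube_fun_upd[OF assms, of x "x k + 1"] cube_fun_upd[OF assms, of x "x k"] by auto

definition cube_state :: "nat \<Rightarrow> (nat \<Rightarrow> complex) \<Rightarrow> (nat \<Rightarrow> int) \<Rightarrow> nat \<Rightarrow> complex" where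
  "cube_state d \<mu> = (\<lambda>x k. if x \<in> cube d \<and>
       (k \<in> {1..d} \<and> x k = 1 \<or> k \<in> {d+2..2*d+1} \<and> x (k-d-1) = 0) then \<mu> k else 0)"

lemma cube_state_lower:
  "k \<in> {1..d} \<Longrightarrow> cube_state d \<mu> x k = (if x \<in> cube d \<and> x k = 1 then \<mu> k else 0)"
  by (simp add: cube_state_def)

lemma cube_state_middle: "cube_state d \<mu> x (d+1) = 0"
  by (simp add: cube_state_def)

lemma cube_state_upper:
  "j \<in> {1..d} \<Longrightarrow> cube_state d \<mu> x (d+1+j) = (if x \<in> cube d \<and> x j = 0 then \<mu> (d+1+j) else 0)"
  by (simp add: cube_state_def)

lemma cube_state_outside_lattice: "x \<notin> lattice d \<Longrightarrow> cube_state d \<mu> x k = 0"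
  by (simp add: cube_state_def cube_def)

lemma cinner_cube_state:
  assumes "\<forall>j\<in>{1..d}. cmod (\<mu> j) = cmod (\<mu> (d+1+j))" and "x \<in> cube d"
  shows "cinner d (cube_state d \<mu> x) \<mu> = (\<Sum>j\<in>{1..d}. (cmod (\<mu> j))\<^sup>2)"
proof -
  have pair: "cube_state d \<mu> x j * cnj (\<mu> j) + cube_state d \<mu> x (d+1+j) * cnj (\<mu> (d+1+j))
      = (cmod (\<mu> j))\<^sup>2" if j: "j \<in> {1..d}" for j
  proof -
    have "x j = 0 \<or> x j = 1"
      using assms(2) j by (auto simp: cube_def)
    moreover have "\<mu> j * cnj (\<mu> j) = (cmod (\<mu> j))\<^sup>2"
      by (rule complex_norm_square[symmetric])
    moreover have "\<mu> (d+1+j) * cnj (\<mu> (d+1+j)) = (cmod (\<mu> j))\<^sup>2"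
      using assms(1) j by (simp add: complex_norm_square[symmetric])
    ultimately show ?thesis
      using assms(2) j by (auto simp: cube_state_def)
  qed
  have "cinner d (cube_state d \<mu> x) \<mu> = (\<Sum>j\<in>{1..d}. cube_state d \<mu> x j * cnj (\<mu> j))
      + cube_state d \<mu> x (d+1) * cnj (\<mu> (d+1))
      + (\<Sum>j\<in>{1..d}. cube_state d \<mu> x (d+1+j) * cnj (\<mu> (d+1+j)))"
    unfolding cinner_def by (rule sum_components_split)
  also have "\<dots> = (\<Sum>j\<in>{1..d}. cube_state d \<mu> x j * cnj (\<mu> j)
      + cube_state d \<mu> x (d+1+j) * cnj (\<mu> (d+1+j)))"
    by (simp add: cube_state_def sum.distrib)
  also have "\<dots> = (\<Sum>j\<in>{1..d}. (cmod (\<mu> j))\<^sup>2)"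
    unfolding of_real_sum by (rule sum.cong[OF refl], rule pair)
  finally show ?thesis .
qed

lemma sum_lower_components_half:
  fixes \<mu> :: "nat \<Rightarrow> complex"
  assumes "(\<Sum>k\<in>{1..2*d+1}. (cmod (\<mu> k))\<^sup>2) = 1"
    and "\<forall>j\<in>{1..d}. cmod (\<mu> j) = cmod (\<mu> (d+1+j))"
    and "\<mu> (d+1) = 0"
  shows "(\<Sum>j\<in>{1..d}. (cmod (\<mu> j))\<^sup>2) = 1/2"
proof -
  have "(\<Sum>j\<in>{1..d}. (cmod (\<mu> (d+1+j)))\<^sup>2) = (\<Sum>j\<in>{1..d}. (cmod (\<mu> j))\<^sup>2)"
    using assms(2) by (intro sum.cong) auto
  then show ?thesis
    using assms(1,3) unfolding sum_components_split[of "\<lambda>k. (cmod (\<mu> k))\<^sup>2"] by simp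
qed

lemma coin_cube_state:
  assumes "\<forall>j\<in>{1..d}. cmod (\<mu> j) = cmod (\<mu> (d+1+j))"
    and "(\<Sum>j\<in>{1..d}. (cmod (\<mu> j))\<^sup>2) = 1/2"
  shows "coin d \<mu> (cube_state d \<mu> x) k =
    (if x \<in> cube d \<and> k \<in> {1..2*d+1} then \<mu> k - cube_state d \<mu> x k else 0)"
proof (cases "x \<in> cube d")
  case True
  have half: "cinner d (cube_state d \<mu> x) \<mu> = 1/2"
    unfolding cinner_cube_state[OF assms(1) True] assms(2) by simp
  show ?thesis
    unfolding coin_def half using True by simp
qed (simp add: coin_def cinner_def cube_state_def)

lemma Uop_cube_state:
  assumes "\<forall>j\<in>{1..d}. cmod (\<mu> j) = cmod (\<mu> (d+1+j))"
    and "(\<Sum>j\<in>{1..d}. (cmod (\<mu> j))\<^sup>2) = 1/2"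
    and "\<mu> (d+1) = 0"
  shows "Uop d (S_lazy d) (P_lazy d) (coin d \<mu>) (cube_state d \<mu>) = (\<lambda>x k. 1 * cube_state d \<mu> x k)"
proof (intro ext)
  fix x k
  note coin_values = coin_cube_state[OF assms(1,2)]
  consider (lower) "k \<in> {1..d}" | (middle) "k = d+1" | (upper) j where "j \<in> {1..d}" "k = d+1+j"
    | (outside) "k \<notin> {1..2*d+1}"
    by (rule component_cases)
  then have "Uop d (S_lazy d) (P_lazy d) (coin d \<mu>) (cube_state d \<mu>) x k = cube_state d \<mu> x k"
  proof cases
    case lower
    have "coin d \<mu> (cube_state d \<mu> (x(k := x k - 1))) k
        = (if x(k := x k - 1) \<in> cube d \<and> x k - 1 \<noteq> 1 then \<mu> k else 0)"
      unfolding coin_values cube_state_lower[OF lower] using lower by auto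
    also have "\<dots> = cube_state d \<mu> x k"
      unfolding cube_fun_upd_minus_one[OF lower] cube_state_lower[OF lower] ..
    finally show ?thesis
      using lower by (simp add: Uop_lazy_apply cube_state_outside_lattice)
  next
    case middle
    then show ?thesis
      using assms(3) cube_state_middle[of d \<mu> x] by (simp add: Uop_lazy_apply coin_values)
  next
    case upper
    have "coin d \<mu> (cube_state d \<mu> (x(j := x j + 1))) (d+1+j)
        = (if x(j := x j + 1) \<in> cube d \<and> x j + 1 \<noteq> 0 then \<mu> (d+1+j) else 0)"
      unfolding coin_values cube_state_upper[OF upper(1)] using upper(1) by auto
    also have "\<dots> = cube_state d \<mu> x (d+1+j)"
      unfolding cube_fun_upd_plus_one[OF upper(1)] cube_state_upper[OF upper(1)] ..
    finally show ?thesis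
      using upper by (simp add: Uop_lazy_apply cube_state_outside_lattice)
  next
    case outside
    then have "cube_state d \<mu> x k = 0"
      by (auto simp: cube_state_def)
    with outside show ?thesis
      by (auto simp: Uop_lazy_apply)
  qed
  then show "Uop d (S_lazy d) (P_lazy d) (coin d \<mu>) (cube_state d \<mu>) x k = 1 * cube_state d \<mu> x k"
    by simp
qed

lemma eigenvalue_one:
  fixes \<mu> :: "nat \<Rightarrow> complex"
  assumes "(\<Sum>k\<in>{1..2*d+1}. (cmod (\<mu> k))\<^sup>2) = 1"
    and "\<forall>j\<in>{1..d}. cmod (\<mu> j) = cmod (\<mu> (d+1+j))"
    and "\<mu> (d+1) = 0"
  shows "is_eigenvalue d (Uop d (S_lazy d) (P_lazy d) (coin d \<mu>)) 1"
  unfolding is_eigenvalue_def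
proof (intro bexI conjI)
  have half: "(\<Sum>j\<in>{1..d}. (cmod (\<mu> j))\<^sup>2) = 1/2"
    using sum_lower_components_half[OF assms] .
  show "cube_state d \<mu> \<in> l2space d"
    by (rule finite_support_in_l2space[OF finite_cube])
      (auto simp: cube_def cube_state_def split: if_splits)
  have "(\<Sum>j\<in>{1..d}. (cmod (\<mu> j))\<^sup>2) \<noteq> 0"
    using half by simp
  then obtain j where j: "j \<in> {1..d}" "(cmod (\<mu> j))\<^sup>2 \<noteq> 0"
    by (rule sum.not_neutral_contains_not_neutral)
  then have "cube_state d \<mu> (latunit j) j \<noteq> 0"
    using latunit_in_cube[OF j(1)] unfolding cube_state_lower[OF j(1)] by (simp add: latunit_def)
  then show "cube_state d \<mu> \<noteq> (\<lambda>x k. 0)"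
    by auto
  show "Uop d (S_lazy d) (P_lazy d) (coin d \<mu>) (cube_state d \<mu>) = (\<lambda>x k. 1 * cube_state d \<mu> x k)"
    using Uop_cube_state[OF assms(2) half assms(3)] .
qed

theorem theorem3p5:
  fixes d :: nat and a :: "nat \<Rightarrow> complex"
  assumes "d \<ge> 1"
    and "(\<Sum>k\<in>{1..2*d+1}. (cmod (a k))\<^sup>2) = 1"
    and "\<forall>j\<in>{1..d}. cmod (a j) = cmod (a (d+1+j))"
    and "a (d+1) = 0"
  shows "is_eigenvalue d (Uop d (S_lazy d) (P_lazy d) (coin d a)) 1
       \<and> is_eigenvalue d (Uop d (S_lazy d) (P_lazy d) (coin d a)) (-1)"
  using eigenvalue_one[OF assms(2-4)] eigenvalue_minus_one[where \<mu>=a, OF assms(4)] by simp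

end
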